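(* Let $s\in(0,\frac12)$ and suppose the jump kernels $j_1^{(n)}$ satisfy both the upper and lower bound with this $s$. There is a constant $c>0$ depending only on $s$ such that for all $n\in\mathbb{N}$ and all $u:V_1^{(n)}\to\mathbb{R}$, $$\mathcal{E}_1^{(n)}(u)\ge c\,\lambda_1\,[\operatorname{Ext}_1^{(n)}u]^2_{H^s([0,1])},$$ where $[v]^2_{H^s([0,1])}=\int_0^1\int_0^1\frac{|v(x)-v(y)|^2}{|x-y|^{1+2s}}dy\,dx$.
   Context: Index graph: vertices $\mathbb{N}$; vertex $i$ has edges $e_{i,2i-2}$ to $2i-2$ (only if $i\ge2$), $e_{i,2i-1},e'_{i,2i-1}$ to $2i-1$, $e_{i,2i}$ to $2i$, weights $r_e>0$ with $r_{e_{i,2i-1}}=r_{e'_{i,2i-1}}$. For $e$ from $i$ to $j$, $\phi_e(x)=\frac{j}{2i}x+s_e$, $s_e=0$ for $e\in\{e_{i,2i-1},e_{i,2i}\}$, $s_e=\frac1{2i}$ for $e\in\{e_{i,2i-2},e'_{i,2i-1}\}$. $E_1^{(n)}$: paths $\sigma=e_1\cdots e_n$ of length $n$ from vertex $1$; $\phi_\sigma=\phi_{e_1}\circ\cdots\circ\phi_{e_n}$, $\delta_\sigma=r_{e_1}\cdots r_{e_n}$. $V_1^{(n)}=\{k/2^n\}_{k=0}^{2^n}$; the wires $\{\phi_\sigma(0),\phi_\sigma(1)\}$ are all pairs of distinct points of $V_1^{(n)}$, each with a unique path $\sigma^{(n)}_{x,y}$. $U_1^{(n)}(x)=[x-2^{-n-1},x+2^{-n-1})\cap[0,1]$,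 $\mu_1^{(n)}(x)=|U_1^{(n)}(x)|$. Kernel $j_1^{(n)}(x,y)=(\delta_{\sigma^{(n)}_{x,y}}\mu_1^{(n)}(x)\mu_1^{(n)}(y))^{-1}$ for $x\ne y$, $0$ for $x=y$. $\mathcal{E}_1^{(n)}(u)=\sum_{x,y\in V_1^{(n)}}(u(x)-u(y))^2j_1^{(n)}(x,y)\mu_1^{(n)}(x)\mu_1^{(n)}(y)$. Kernel bounds: there are $0<\lambda_1\le\Lambda_1$ with $\lambda_1|x-y|^{-1-2s}\le j_1^{(n)}(x,y)\le\Lambda_1|x-y|^{-1-2s}$ for all $n\ge0$ and distinct $x,y\in V_1^{(n)}$. $\operatorname{Ext}_1^{(n)}u(x)=u(\bar x)$ where $\bar x\in V_1^{(n)}$ satisfies $x\in U_1^{(n)}(\bar x)$. *)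

theory Defs
  imports "HOL-Analysis.Analysis"
begin

text \<open>Edges leaving vertex i of the index graph, by kind:
  EK0 = e_{i,2i-2} (only if i >= 2), EK1 = e_{i,2i-1}, EK1' = e'_{i,2i-1}, EK2 = e_{i,2i}.\<close>
datatype ekind = EK0 | EK1 | EK1' | EK2

fun tgt :: "nat \<Rightarrow> ekind \<Rightarrow> nat" where
  "tgt i EK0 = 2*i - 2"
| "tgt i EK1 = 2*i - 1"
| "tgt i EK1' = 2*i - 1"
| "tgt i EK2 = 2*i"

fun shift :: "nat \<Rightarrow> ekind \<Rightarrow> real" where
  "shift i EK0 = 1 / (2 * real i)"
| "shift i EK1 = 0"
| "shift i EK1' = 1 / (2 * real i)"
| "shift i EK2 = 0"

definition phi_e :: "nat \<Rightarrow> ekind \<Rightarrow> real \<Rightarrow> real" where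
  "phi_e i k x = real (tgt i k) / (2 * real i) * x + shift i k"

fun path_ok :: "nat \<Rightarrow> ekind list \<Rightarrow> bool" where
  "path_ok i [] = True"
| "path_ok i (k # ks) = ((k = EK0 \<longrightarrow> i \<ge> 2) \<and> path_ok (tgt i k) ks)"

fun phi_path :: "nat \<Rightarrow> ekind list \<Rightarrow> real \<Rightarrow> real" where
  "phi_path i [] x = x"
| "phi_path i (k # ks) x = phi_e i k (phi_path (tgt i k) ks x)"

fun delta_path :: "(nat \<Rightarrow> ekind \<Rightarrow> real) \<Rightarrow> nat \<Rightarrow> ekind list \<Rightarrow> real" where
  "delta_path r i [] = 1"
| "delta_path r i (k # ks) = r i k * delta_path r (tgt i k) ks"

definition valid_weights :: "(nat \<Rightarrow> ekind \<Rightarrow> real) \<Rightarrow> bool" where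
  "valid_weights r \<longleftrightarrow>
     (\<forall>i\<ge>1. \<forall>k. (k = EK0 \<longrightarrow> i \<ge> 2) \<longrightarrow> r i k > 0) \<and> (\<forall>i\<ge>1. r i EK1 = r i EK1')"

definition E1 :: "nat \<Rightarrow> ekind list set" where
  "E1 n = {\<sigma>. length \<sigma> = n \<and> path_ok 1 \<sigma>}"

definition V1 :: "nat \<Rightarrow> real set" where
  "V1 n = {real k / 2 ^ n | k. k \<le> 2 ^ n}"

definition sigma_xy :: "nat \<Rightarrow> real \<Rightarrow> real \<Rightarrow> ekind list" where
  "sigma_xy n x y = (THE \<sigma>. \<sigma> \<in> E1 n \<and> {phi_path 1 \<sigma> 0, phi_path 1 \<sigma> 1} = {x, y})"

definition U1 :: "nat \<Rightarrow> real \<Rightarrow> real set" where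
  "U1 n x = {x - 1 / 2 ^ (n+1) ..< x + 1 / 2 ^ (n+1)} \<inter> {0..1}"

definition mu1 :: "nat \<Rightarrow> real \<Rightarrow> real" where
  "mu1 n x = measure lborel (U1 n x)"

definition j1 :: "(nat \<Rightarrow> ekind \<Rightarrow> real) \<Rightarrow> nat \<Rightarrow> real \<Rightarrow> real \<Rightarrow> real" where
  "j1 r n x y = (if x = y then 0
     else inverse (delta_path r 1 (sigma_xy n x y) * mu1 n x * mu1 n y))"

definition Energy1 :: "(nat \<Rightarrow> ekind \<Rightarrow> real) \<Rightarrow> nat \<Rightarrow> (real \<Rightarrow> real) \<Rightarrow> real" where
  "Energy1 r n u = (\<Sum>x\<in>V1 n. \<Sum>y\<in>V1 n. (u x - u y)^2 * j1 r n x y * mu1 n x * mu1 n y)"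

definition Ext1 :: "nat \<Rightarrow> (real \<Rightarrow> real) \<Rightarrow> real \<Rightarrow> real" where
  "Ext1 n u x = u (THE xb. xb \<in> V1 n \<and> x \<in> U1 n xb)"

definition Hs_seminorm_sq :: "real \<Rightarrow> (real \<Rightarrow> real) \<Rightarrow> ennreal" where
  "Hs_seminorm_sq s v = set_nn_integral lborel {0..1} (\<lambda>x.
       set_nn_integral lborel {0..1} (\<lambda>y.
         ennreal ((v x - v y)^2 / abs (x - y) powr (1 + 2 * s))))"

end

theory Submission
  imports Defs
begin

text \<open>The extension Ext u is constant on the cells U x (x \<in> V), which cover [0,1] and have
  width at most h = 2 powr -n, so the squared seminorm of Ext u is at most the sum over pairs
  x \<noteq> y of (u x - u y)^2 times K(U x, U y), the integral of |a - b| powr -(1 + 2s) over U x \<times> U y.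
  Write 1 + 2s = 2q with q < 1 and measure a and b from the endpoints of their cells that face
  each other, at distances t1, t2 \<le> h: then |a - b| = t1 + t2 + (|x - y| - h) and AM-GM gives
  |a - b| powr -2q \<le> (2h/|x - y|) powr 2q * (t1 t2) powr -q.  Both factors t powr -q are
  integrable because q < 1 (this is where s < 1/2 is needed), hence
  K(U x, U y) \<le> C(s) |x - y| powr -(1 + 2s) h^2.  Finally h^2 \<le> 4 mu x mu y and
  |x - y| powr -(1 + 2s) \<le> j x y / \<lambda>, so each term is dominated by C(s)/\<lambda> times the
  corresponding term of the energy.\<close>

lemma has_integral_abs_powr_neg:
  fixes q h :: real
  assumes "0 < q" "q < 1" "0 \<le> h"
  shows "((\<lambda>x. \<bar>x\<bar> powr (-q)) has_integral 2 * (h powr (1-q) / (1-q))) {-h..h}"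
proof -
  have "((\<lambda>x. x powr (-q)) has_integral h powr (1-q) / (1-q)) {0..h}"
    using has_integral_powr_from_0[of "-q" h] assms by (simp add: add.commute)
  then have right: "((\<lambda>x. \<bar>x\<bar> powr (-q)) has_integral h powr (1-q) / (1-q)) {0..h}"
    by (rule has_integral_eq[rotated]) simp
  then have "((\<lambda>x. \<bar>-x\<bar> powr (-q)) has_integral h powr (1-q) / (1-q)) {-h..-0}"
    by (subst has_integral_reflect_real) simp
  then have left: "((\<lambda>x. \<bar>x\<bar> powr (-q)) has_integral h powr (1-q) / (1-q)) {-h..0}"
    by simp
  show ?thesis
    using has_integral_combine[OF _ _ left right] assms by simp
qed

lemma nn_integral_abs_powr_neg_centered:
  fixes q h c :: real
  assumes "0 < q" "q < 1" "0 \<le> h"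
  shows "(\<integral>\<^sup>+a. ennreal (\<bar>a - c\<bar> powr (-q)) * indicator {c-h..c+h} a \<partial>lborel)
     = ennreal (2 * (h powr (1-q) / (1-q)))"
proof -
  have "(\<integral>\<^sup>+a. ennreal (\<bar>a - c\<bar> powr (-q)) * indicator {c-h..c+h} a \<partial>lborel)
     = (\<integral>\<^sup>+x. ennreal (\<bar>x\<bar> powr (-q)) * indicator {-h..h} x \<partial>lborel)"
    by (subst lborel_distr_plus[symmetric, of c])
       (auto simp: nn_integral_distr indicator_def intro!: nn_integral_cong)
  also have "\<dots> = ennreal (2 * (h powr (1-q) / (1-q)))"
    by (rule nn_integral_has_integral_lebesgue'[OF _ has_integral_abs_powr_neg[OF assms]]) simp
  finally show ?thesis .
qed

lemma powr_neg_gap_le: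
  fixes q h d t1 t2 :: real
  assumes q: "0 < q" and t1: "0 < t1" "t1 \<le> h" and t2: "0 < t2" "t2 \<le> h" and hd: "h \<le> d"
  shows "(t1 + t2 + (d - h)) powr (-(2*q)) \<le> (2*h/d) powr (2*q) * (t1 * t2) powr (-q)"
proof -
  define D where "D = t1 + t2 + (d - h)"
  have "h > 0" "d > 0" "D > 0" using t1 t2 hd by (auto simp: D_def)
  show ?thesis
  proof (cases "2*h \<le> d")
    case True
    have "D powr (-(2*q)) \<le> (d/2) powr (-(2*q))"
      using True t1 t2 \<open>d > 0\<close> q by (intro powr_mono2') (auto simp: D_def)
    also have "\<dots> = (2*h/d) powr (2*q) * (h * h) powr (-q)"
      using \<open>h > 0\<close> \<open>d > 0\<close>
      by (simp add: powr_divide powr_minus_divide powr_mult powr_add[symmetric] mult_ac)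
    also have "\<dots> \<le> (2*h/d) powr (2*q) * (t1 * t2) powr (-q)"
      using t1 t2 q by (intro mult_left_mono powr_mono2' mult_mono) auto
    finally show ?thesis by (simp add: D_def)
  next
    case False
    have "D powr (-(2*q)) = (D * D) powr (-q)"
      using \<open>D > 0\<close> by (simp add: powr_mult powr_add[symmetric])
    also have "\<dots> \<le> (t1 * t2) powr (-q)"
      using t1 t2 hd q by (intro powr_mono2' mult_mono) (auto simp: D_def)
    also have "\<dots> \<le> (2*h/d) powr (2*q) * (t1 * t2) powr (-q)"
    proof -
      have "1 \<le> (2*h/d) powr (2*q)"
        using False \<open>d > 0\<close> q by (intro ge_one_powr_ge_zero) auto
      then show ?thesis
        using mult_right_mono[of 1 _ "(t1 * t2) powr (-q)"] by simp
    qed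
    finally show ?thesis by (simp add: D_def)
  qed
qed

definition facing_edge :: "real \<Rightarrow> real \<Rightarrow> real \<Rightarrow> real" where
  "facing_edge h x y = (if x < y then x + h/2 else x - h/2)"

lemma abs_sub_facing_edge_le: "\<bar>a - x\<bar> \<le> h/2 \<Longrightarrow> \<bar>a - facing_edge h x y\<bar> \<le> h"
  unfolding facing_edge_def by (auto simp: abs_if split: if_splits)

lemma dist_eq_facing_edges:
  fixes h x y a b :: real
  assumes "h \<le> \<bar>x - y\<bar>" "\<bar>a - x\<bar> \<le> h/2" "\<bar>b - y\<bar> \<le> h/2"
  shows "\<bar>a - b\<bar> = \<bar>a - facing_edge h x y\<bar> + \<bar>b - facing_edge h y x\<bar> + (\<bar>x - y\<bar> - h)"
  using assms unfolding facing_edge_def by (auto simp: abs_if split: if_splits)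

lemma powr_neg_dist_le_facing_edges:
  fixes q h x y a b :: real
  assumes q: "0 < q" and h: "h \<le> \<bar>x - y\<bar>"
    and a: "\<bar>a - x\<bar> \<le> h/2" "a \<noteq> facing_edge h x y"
    and b: "\<bar>b - y\<bar> \<le> h/2" "b \<noteq> facing_edge h y x"
  shows "\<bar>a - b\<bar> powr (-(2*q)) \<le> (2*h/\<bar>x - y\<bar>) powr (2*q)
           * (\<bar>a - facing_edge h x y\<bar> powr (-q) * \<bar>b - facing_edge h y x\<bar> powr (-q))"
proof -
  let ?t1 = "\<bar>a - facing_edge h x y\<bar>" and ?t2 = "\<bar>b - facing_edge h y x\<bar>"
  have "0 < ?t1" "?t1 \<le> h" "0 < ?t2" "?t2 \<le> h"
    using a b abs_sub_facing_edge_le by auto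
  from powr_neg_gap_le[OF q this h] show ?thesis
    unfolding dist_eq_facing_edges[OF h a(1) b(1)] by (simp add: powr_mult)
qed

definition pair_kernel :: "real \<Rightarrow> real set \<Rightarrow> real set \<Rightarrow> ennreal" where
  "pair_kernel p A B =
     set_nn_integral lborel A (\<lambda>a. set_nn_integral lborel B (\<lambda>b. ennreal (\<bar>a - b\<bar> powr (-p))))"

lemma nn_integral_powr_neg_dist_le:
  fixes q h x y a :: real
  assumes q: "0 < q" "q < 1" and h: "0 \<le> h" "h \<le> \<bar>x - y\<bar>"
    and a: "\<bar>a - x\<bar> \<le> h/2" "a \<noteq> facing_edge h x y"
    and B: "B \<subseteq> {y - h/2 .. y + h/2}"
  shows "set_nn_integral lborel B (\<lambda>b. ennreal (\<bar>a - b\<bar> powr (-(2*q))))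
    \<le> ennreal ((2*h/\<bar>x - y\<bar>) powr (2*q) * \<bar>a - facing_edge h x y\<bar> powr (-q)
               * (2 * (h powr (1-q) / (1-q))))"
proof -
  define c where "c = facing_edge h y x"
  define M where "M = (2*h/\<bar>x - y\<bar>) powr (2*q) * \<bar>a - facing_edge h x y\<bar> powr (-q)"
  define I where "I = 2 * (h powr (1-q) / (1-q))"
  have "M \<ge> 0" "I \<ge> 0" using q by (simp_all add: M_def I_def)
  have "set_nn_integral lborel B (\<lambda>b. ennreal (\<bar>a - b\<bar> powr (-(2*q))))
      \<le> (\<integral>\<^sup>+b. ennreal M * (ennreal (\<bar>b - c\<bar> powr (-q)) * indicator {c-h..c+h} b) \<partial>lborel)"
  proof (rule nn_integral_mono_AE)
    show "AE b in lborel. ennreal (\<bar>a - b\<bar> powr (-(2*q))) * indicator B b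
        \<le> ennreal M * (ennreal (\<bar>b - c\<bar> powr (-q)) * indicator {c-h..c+h} b)"
      using AE_lborel_singleton[of c] \<comment> \<open>at b = c the right-hand side is 0, since 0 powr -q = 0\<close>
    proof eventually_elim
      case (elim b)
      show ?case
      proof (cases "b \<in> B")
        case True
        then have "y - h/2 \<le> b" "b \<le> y + h/2" using B by auto
        then have b: "\<bar>b - y\<bar> \<le> h/2" by arith
        then have "\<bar>b - c\<bar> \<le> h" unfolding c_def by (rule abs_sub_facing_edge_le)
        then have "b \<in> {c-h..c+h}" by (auto simp: abs_le_iff)
        moreover have "\<bar>a - b\<bar> powr (-(2*q)) \<le> M * \<bar>b - c\<bar> powr (-q)"
          using powr_neg_dist_le_facing_edges[OF q(1) h(2) a b] elim
          by (simp add: M_def c_def mult_ac)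
        then have "ennreal (\<bar>a - b\<bar> powr (-(2*q))) \<le> ennreal M * ennreal (\<bar>b - c\<bar> powr (-q))"
          using \<open>M \<ge> 0\<close> by (simp add: ennreal_leI ennreal_mult[symmetric])
        ultimately show ?thesis using True by simp
      qed simp
    qed
  qed
  also have "\<dots> = ennreal M * (\<integral>\<^sup>+b. ennreal (\<bar>b - c\<bar> powr (-q)) * indicator {c-h..c+h} b \<partial>lborel)"
    by (rule nn_integral_cmult) measurable
  also have "\<dots> = ennreal M * ennreal I"
    using nn_integral_abs_powr_neg_centered[OF q h(1)] by (simp add: I_def)
  also have "\<dots> = ennreal (M * I)"
    using \<open>M \<ge> 0\<close> \<open>I \<ge> 0\<close> by (simp add: ennreal_mult)
  finally show ?thesis unfolding M_def I_def .
qed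

lemma powr_facing_constant_eq:
  fixes q h d :: real
  assumes "0 < h" "q < 1" "0 \<le> d"
  shows "(2*h/d) powr (2*q) * (2 * (h powr (1-q) / (1-q)))^2
    = 4 * 2 powr (2*q) / (1-q)^2 * d powr (-(2*q)) * h^2"
proof -
  have "h powr (2*q) * (h powr (1-q) * h powr (1-q)) = h powr (2*q + (1-q) + (1-q))"
    by (simp only: powr_add mult.assoc)
  also have "\<dots> = h * h"
    using assms(1) by (simp add: powr_numeral flip: power2_eq_square)
  finally show ?thesis
    using assms by (simp add: powr_divide powr_mult powr_minus_divide power2_eq_square field_simps)
qed

lemma pair_kernel_le:
  fixes q h x y :: real
  assumes q: "0 < q" "q < 1" and h: "0 < h" "h \<le> \<bar>x - y\<bar>"
    and A: "A \<subseteq> {x - h/2 .. x + h/2}" and B: "B \<subseteq> {y - h/2 .. y + h/2}"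
  shows "pair_kernel (2*q) A B
    \<le> ennreal (4 * 2 powr (2*q) / (1-q)^2 * \<bar>x - y\<bar> powr (-(2*q)) * h^2)"
proof -
  define c where "c = facing_edge h x y"
  define M where "M = (2*h/\<bar>x - y\<bar>) powr (2*q)"
  define I where "I = 2 * (h powr (1-q) / (1-q))"
  have "M \<ge> 0" "I \<ge> 0" using q by (simp_all add: M_def I_def)
  have "pair_kernel (2*q) A B
      \<le> (\<integral>\<^sup>+a. ennreal (M * I) * (ennreal (\<bar>a - c\<bar> powr (-q)) * indicator {c-h..c+h} a) \<partial>lborel)"
    unfolding pair_kernel_def
  proof (rule nn_integral_mono_AE)
    show "AE a in lborel.
        set_nn_integral lborel B (\<lambda>b. ennreal (\<bar>a - b\<bar> powr (-(2*q)))) * indicator A a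
        \<le> ennreal (M * I) * (ennreal (\<bar>a - c\<bar> powr (-q)) * indicator {c-h..c+h} a)"
      using AE_lborel_singleton[of c]
    proof eventually_elim
      case (elim a)
      show ?case
      proof (cases "a \<in> A")
        case True
        then have "x - h/2 \<le> a" "a \<le> x + h/2" using A by auto
        then have a: "\<bar>a - x\<bar> \<le> h/2" by arith
        then have "\<bar>a - c\<bar> \<le> h" unfolding c_def by (rule abs_sub_facing_edge_le)
        then have "a \<in> {c-h..c+h}" by (auto simp: abs_le_iff)
        moreover have "set_nn_integral lborel B (\<lambda>b. ennreal (\<bar>a - b\<bar> powr (-(2*q))))
            \<le> ennreal (M * \<bar>a - c\<bar> powr (-q) * I)"
          using nn_integral_powr_neg_dist_le[OF q less_imp_le[OF h(1)] h(2) a _ B] elim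
          unfolding M_def I_def c_def by simp
        moreover have "ennreal (M * \<bar>a - c\<bar> powr (-q) * I)
            = ennreal (M * I) * ennreal (\<bar>a - c\<bar> powr (-q))"
          using \<open>M \<ge> 0\<close> \<open>I \<ge> 0\<close> by (simp add: ennreal_mult mult_ac)
        ultimately show ?thesis using True by simp
      qed simp
    qed
  qed
  also have "\<dots> = ennreal (M * I) * (\<integral>\<^sup>+a. ennreal (\<bar>a - c\<bar> powr (-q)) * indicator {c-h..c+h} a \<partial>lborel)"
    by (rule nn_integral_cmult) measurable
  also have "\<dots> = ennreal (M * I) * ennreal I"
    using nn_integral_abs_powr_neg_centered[OF q less_imp_le[OF h(1)]] by (simp add: I_def)
  also have "\<dots> = ennreal (M * I^2)"
    using \<open>M \<ge> 0\<close> \<open>I \<ge> 0\<close> by (simp add: ennreal_mult power2_eq_square mult_ac)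
  also have "M * I^2 = 4 * 2 powr (2*q) / (1-q)^2 * \<bar>x - y\<bar> powr (-(2*q)) * h^2"
    unfolding M_def I_def using h(1) q(2) by (rule powr_facing_constant_eq) simp
  finally show ?thesis .
qed

lemma V1_eq: "V1 n = (\<lambda>k. real k / 2 ^ n) ` {..2^n}"
  unfolding V1_def by auto

lemma finite_V1: "finite (V1 n)"
  unfolding V1_eq by simp

lemma V1_subset_unit: "V1 n \<subseteq> {0..1}"
proof
  fix x assume "x \<in> V1 n"
  then obtain k :: nat where "k \<le> 2^n" "x = real k / 2^n"
    unfolding V1_def by auto
  moreover from \<open>k \<le> 2^n\<close> have "real k \<le> 2^n"
    by (metis of_nat_le_iff of_nat_numeral of_nat_power)
  ultimately show "x \<in> {0..1}" by simp
qed

lemma V1_separated: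
  assumes "x \<in> V1 n" "y \<in> V1 n" "x \<noteq> y"
  shows "1/2^n \<le> \<bar>x - y\<bar>"
proof -
  obtain i j :: nat where x: "x = real i / 2^n" and y: "y = real j / 2^n"
    using assms unfolding V1_def by auto
  with assms have "1 \<le> \<bar>real i - real j\<bar>" by auto
  then have "1/2^n \<le> \<bar>real i - real j\<bar> / 2^n" by (simp add: divide_right_mono)
  also have "\<dots> = \<bar>x - y\<bar>" by (simp add: x y abs_divide flip: diff_divide_distrib)
  finally show ?thesis .
qed

lemma U1_eq: "U1 n x = {x - 1/2^n/2 ..< x + 1/2^n/2} \<inter> {0..1}"
  unfolding U1_def by (simp add: field_simps)

lemma sets_U1 [measurable]: "U1 n x \<in> sets borel"
  unfolding U1_def by measurable

lemma U1_subset_cell: "U1 n x \<subseteq> {x - 1/2^n/2 .. x + 1/2^n/2}"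
  unfolding U1_eq by auto

lemma U1_unique:
  assumes "x \<in> V1 n" "y \<in> V1 n" "a \<in> U1 n x" "a \<in> U1 n y"
  shows "x = y"
proof (rule ccontr)
  assume "x \<noteq> y"
  then have "1/2^n \<le> \<bar>x - y\<bar>" using V1_separated assms by blast
  moreover have "\<bar>x - y\<bar> < 1/2^n" using assms(3,4) unfolding U1_eq by auto
  ultimately show False by simp
qed

lemma U1_cover:
  assumes "a \<in> {0..1}"
  shows "\<exists>x\<in>V1 n. a \<in> U1 n x"
proof -
  define k where "k = nat \<lfloor>a * 2^n + 1/2\<rfloor>"
  have "real k = of_int \<lfloor>a * 2^n + 1/2\<rfloor>"
    using assms by (simp add: k_def)
  then have k: "real k \<le> a * 2^n + 1/2" "a * 2^n + 1/2 < real k + 1"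
    by linarith+
  moreover have "a * 2^n \<le> 2^n" using assms by simp
  ultimately have "real k < 2^n + 1" by linarith
  then have "real k < real (2^n + 1)" by simp
  then have "k \<le> 2^n" by (simp only: of_nat_less_iff)
  then have "real k / 2^n \<in> V1 n" unfolding V1_def by auto
  moreover have "a \<in> U1 n (real k / 2^n)"
    using k assms unfolding U1_eq by (auto simp: field_simps)
  ultimately show ?thesis by blast
qed

lemma Ext1_eq:
  assumes "x \<in> V1 n" "a \<in> U1 n x"
  shows "Ext1 n u a = u x"
proof -
  have "(THE xb. xb \<in> V1 n \<and> a \<in> U1 n xb) = x"
    by (rule the_equality) (use assms U1_unique in blast)+
  then show ?thesis unfolding Ext1_def by simp
qed

lemma measure_centered_Ico_inter_unit_ge:
  fixes x h :: real
  assumes "x \<in> {0..1}" "0 < h" "h \<le> 1"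
  shows "h/2 \<le> measure lborel ({x - h/2 ..< x + h/2} \<inter> {0..1})"
proof -
  let ?U = "{x - h/2 ..< x + h/2} \<inter> {0..1}"
  have U: "?U \<in> fmeasurable lborel"
    by (rule fmeasurableI2[OF fmeasurable_cbox[of "x - h/2" "x + h/2"]]) auto
  obtain l where l: "{l ..< l + h/2} \<subseteq> ?U"
  proof (cases "h/2 \<le> x")
    case True
    then show ?thesis using assms by (intro that[of "x - h/2"]) (auto simp: subset_eq)
  next
    case False
    then show ?thesis using assms by (intro that[of x]) (auto simp: subset_eq)
  qed
  have "measure lborel {l ..< l + h/2} \<le> measure lborel ?U"
    using l U by (intro measure_mono_fmeasurable) auto
  then show ?thesis using \<open>0 < h\<close> by simp
qed

lemma mu1_ge:
  assumes "x \<in> V1 n"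
  shows "1/2^n/2 \<le> mu1 n x"
proof -
  have "x \<in> {0..1}" using assms V1_subset_unit by blast
  then show ?thesis
    unfolding mu1_def U1_eq by (rule measure_centered_Ico_inter_unit_ge) simp_all
qed

lemma Ext1_diff_sq_le_cells:
  "ennreal ((Ext1 n u a - Ext1 n u b)^2 / \<bar>a - b\<bar> powr p) * indicator {0..1} b * indicator {0..1} a
    \<le> (\<Sum>x\<in>V1 n. \<Sum>y\<in>V1 n. ennreal ((u x - u y)^2)
          * (ennreal (\<bar>a - b\<bar> powr (-p)) * indicator (U1 n y) b * indicator (U1 n x) a))"
proof (cases "a \<in> {0..1} \<and> b \<in> {0..1}")
  case True
  then obtain x y where x: "x \<in> V1 n" "a \<in> U1 n x" and y: "y \<in> V1 n" "b \<in> U1 n y"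
    using U1_cover by meson
  have "ennreal ((Ext1 n u a - Ext1 n u b)^2 / \<bar>a - b\<bar> powr p) * indicator {0..1} b * indicator {0..1} a
      = ennreal ((u x - u y)^2) * (ennreal (\<bar>a - b\<bar> powr (-p)) * indicator (U1 n y) b * indicator (U1 n x) a)"
    using True x y by (simp add: Ext1_eq powr_minus_divide divide_inverse ennreal_mult)
  also have "\<dots> \<le> (\<Sum>y\<in>V1 n. ennreal ((u x - u y)^2)
          * (ennreal (\<bar>a - b\<bar> powr (-p)) * indicator (U1 n y) b * indicator (U1 n x) a))"
    by (rule member_le_sum[OF y(1)]) (simp_all add: finite_V1)
  also have "\<dots> \<le> (\<Sum>x\<in>V1 n. \<Sum>y\<in>V1 n. ennreal ((u x - u y)^2)
          * (ennreal (\<bar>a - b\<bar> powr (-p)) * indicator (U1 n y) b * indicator (U1 n x) a))"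
    by (rule member_le_sum[OF x(1)]) (simp_all add: finite_V1)
  finally show ?thesis .
qed auto

lemma Hs_seminorm_sq_Ext1_le:
  "Hs_seminorm_sq s (Ext1 n u)
    \<le> (\<Sum>x\<in>V1 n. \<Sum>y\<in>V1 n. ennreal ((u x - u y)^2) * pair_kernel (1 + 2 * s) (U1 n x) (U1 n y))"
proof -
  let ?p = "1 + 2 * s"
  \<comment> \<open>Ext1 n u need not be measurable, so nn_integral_multc is not available\<close>
  have pull_indicator: "(\<integral>\<^sup>+b. f b \<partial>lborel) * indicator S a = (\<integral>\<^sup>+b. f b * indicator S a \<partial>lborel)"
    for f :: "real \<Rightarrow> ennreal" and S a
    by (cases "a \<in> S") simp_all
  have "Hs_seminorm_sq s (Ext1 n u)
      = (\<integral>\<^sup>+a. \<integral>\<^sup>+b. ennreal ((Ext1 n u a - Ext1 n u b)^2 / \<bar>a - b\<bar> powr ?p)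
            * indicator {0..1} b * indicator {0..1} a \<partial>lborel \<partial>lborel)"
    unfolding Hs_seminorm_sq_def pull_indicator ..
  also have "\<dots> \<le> (\<integral>\<^sup>+a. \<integral>\<^sup>+b. (\<Sum>x\<in>V1 n. \<Sum>y\<in>V1 n. ennreal ((u x - u y)^2)
          * (ennreal (\<bar>a - b\<bar> powr (-?p)) * indicator (U1 n y) b * indicator (U1 n x) a)) \<partial>lborel \<partial>lborel)"
    by (intro nn_integral_mono Ext1_diff_sq_le_cells)
  also have "\<dots> = (\<Sum>x\<in>V1 n. \<Sum>y\<in>V1 n. ennreal ((u x - u y)^2) * pair_kernel ?p (U1 n x) (U1 n y))"
    unfolding pair_kernel_def pull_indicator
    by (simp add: nn_integral_sum nn_integral_cmult mult.assoc)
  finally show ?thesis .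
qed

lemma pair_kernel_U1_le_j1:
  assumes s: "0 < s" "s < 1/2" and lam: "0 < lam"
    and xy: "x \<in> V1 n" "y \<in> V1 n" "x \<noteq> y"
    and j: "lam * \<bar>x - y\<bar> powr (-1 - 2 * s) \<le> j1 r n x y"
  shows "pair_kernel (1 + 2 * s) (U1 n x) (U1 n y)
    \<le> ennreal (16 * 2 powr (1 + 2 * s) / (1/2 - s)^2 / lam * (j1 r n x y * mu1 n x * mu1 n y))"
proof -
  define q where "q = 1/2 + s"
  define h :: real where "h = 1/2^n"
  have q: "0 < q" "q < 1" using s by (auto simp: q_def)
  have "pair_kernel (2*q) (U1 n x) (U1 n y)
      \<le> ennreal (4 * 2 powr (2*q) / (1-q)^2 * \<bar>x - y\<bar> powr (-(2*q)) * h^2)"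
    using V1_separated[OF xy] U1_subset_cell unfolding h_def
    by (intro pair_kernel_le q) simp_all
  also have "\<dots> \<le> ennreal (16 * 2 powr (2*q) / (1-q)^2 / lam * (j1 r n x y * mu1 n x * mu1 n y))"
  proof (rule ennreal_leI)
    have "-(2*q) = -1 - 2 * s" by (simp add: q_def)
    with j lam have "\<bar>x - y\<bar> powr (-(2*q)) \<le> j1 r n x y / lam"
      by (simp add: pos_le_divide_eq mult.commute)
    moreover have "h/2 * (h/2) \<le> mu1 n x * mu1 n y"
      using mu1_ge[OF xy(1)] mu1_ge[OF xy(2)] by (intro mult_mono') (auto simp: h_def)
    then have "h^2 \<le> 4 * (mu1 n x * mu1 n y)" by (simp add: power2_eq_square)
    ultimately have "\<bar>x - y\<bar> powr (-(2*q)) * h^2 \<le> j1 r n x y / lam * (4 * (mu1 n x * mu1 n y))"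
      by (intro mult_mono') auto
    then have "4 * 2 powr (2*q) / (1-q)^2 * (\<bar>x - y\<bar> powr (-(2*q)) * h^2)
        \<le> 4 * 2 powr (2*q) / (1-q)^2 * (j1 r n x y / lam * (4 * (mu1 n x * mu1 n y)))"
      by (rule mult_left_mono) simp
    then show "4 * 2 powr (2*q) / (1-q)^2 * \<bar>x - y\<bar> powr (-(2*q)) * h^2
        \<le> 16 * 2 powr (2*q) / (1-q)^2 / lam * (j1 r n x y * mu1 n x * mu1 n y)"
      by (simp add: field_simps)
  qed
  finally show ?thesis by (simp add: q_def)
qed

lemma j1_mu1_nonneg:
  assumes lam: "0 < lam"
    and j: "\<forall>x\<in>V1 n. \<forall>y\<in>V1 n. x \<noteq> y \<longrightarrow> lam * \<bar>x - y\<bar> powr (-1 - 2 * s) \<le> j1 r n x y"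
    and xy: "x \<in> V1 n" "y \<in> V1 n"
  shows "0 \<le> j1 r n x y * mu1 n x * mu1 n y"
proof -
  have "0 \<le> j1 r n x y"
  proof (cases "x = y")
    case False
    then have "lam * \<bar>x - y\<bar> powr (-1 - 2 * s) \<le> j1 r n x y" using j xy by blast
    moreover have "0 \<le> lam * \<bar>x - y\<bar> powr (-1 - 2 * s)" using lam by simp
    ultimately show ?thesis by linarith
  qed (simp add: j1_def)
  moreover have "0 \<le> mu1 n x" "0 \<le> mu1 n y"
    using mu1_ge[OF xy(1)] mu1_ge[OF xy(2)] by (auto intro: order_trans[rotated])
  ultimately show ?thesis by simp
qed

lemma Hs_seminorm_sq_Ext1_le_Energy1:
  assumes s: "0 < s" "s < 1/2" and lam: "0 < lam"
    and j: "\<forall>x\<in>V1 n. \<forall>y\<in>V1 n. x \<noteq> y \<longrightarrow> lam * \<bar>x - y\<bar> powr (-1 - 2 * s) \<le> j1 r n x y"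
  shows "ennreal ((1/2 - s)^2 / (16 * 2 powr (1 + 2 * s)) * lam) * Hs_seminorm_sq s (Ext1 n u)
    \<le> ennreal (Energy1 r n u)"
proof -
  define C where "C = 16 * 2 powr (1 + 2 * s) / (1/2 - s)^2"
  define T where "T x y = (u x - u y)^2 * j1 r n x y * mu1 n x * mu1 n y" for x y
  have "C > 0" using s by (simp add: C_def)
  have T_nonneg: "0 \<le> T x y" if "x \<in> V1 n" "y \<in> V1 n" for x y
    using j1_mu1_nonneg[OF lam j that] by (simp add: T_def mult.assoc)
  have term_le: "ennreal ((u x - u y)^2) * pair_kernel (1 + 2 * s) (U1 n x) (U1 n y)
      \<le> ennreal (C / lam * T x y)" if "x \<in> V1 n" "y \<in> V1 n" for x y
  proof (cases "x = y")
    case False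
    have "ennreal ((u x - u y)^2) * pair_kernel (1 + 2 * s) (U1 n x) (U1 n y)
        \<le> ennreal ((u x - u y)^2) * ennreal (C / lam * (j1 r n x y * mu1 n x * mu1 n y))"
      using pair_kernel_U1_le_j1[OF s lam that False] j that False
      by (intro mult_left_mono) (simp_all add: C_def)
    also have "\<dots> = ennreal ((u x - u y)^2 * (C / lam * (j1 r n x y * mu1 n x * mu1 n y)))"
      using j1_mu1_nonneg[OF lam j that] \<open>C > 0\<close> lam by (intro ennreal_mult[symmetric]) auto
    also have "\<dots> = ennreal (C / lam * T x y)"
      by (simp add: T_def mult_ac)
    finally show ?thesis .
  qed simp
  have Energy1_eq: "Energy1 r n u = (\<Sum>x\<in>V1 n. \<Sum>y\<in>V1 n. T x y)"
    by (simp add: Energy1_def T_def)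
  have "Hs_seminorm_sq s (Ext1 n u)
      \<le> (\<Sum>x\<in>V1 n. \<Sum>y\<in>V1 n. ennreal ((u x - u y)^2) * pair_kernel (1 + 2 * s) (U1 n x) (U1 n y))"
    by (rule Hs_seminorm_sq_Ext1_le)
  also have "\<dots> \<le> (\<Sum>x\<in>V1 n. \<Sum>y\<in>V1 n. ennreal (C / lam * T x y))"
    by (intro sum_mono term_le)
  also have "\<dots> = ennreal (C / lam * Energy1 r n u)"
    using T_nonneg \<open>C > 0\<close> lam
    by (simp add: Energy1_eq sum_distrib_left sum_ennreal sum_nonneg)
  finally have "ennreal (lam / C) * Hs_seminorm_sq s (Ext1 n u)
      \<le> ennreal (lam / C) * ennreal (C / lam * Energy1 r n u)"
    by (rule mult_left_mono) simp
  also have "\<dots> = ennreal (Energy1 r n u)"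
    using \<open>C > 0\<close> lam T_nonneg
    by (simp add: Energy1_eq sum_nonneg flip: ennreal_mult)
  finally show ?thesis by (simp add: C_def mult.commute)
qed

theorem lemma5p11:
  fixes s :: real
  assumes "0 < s" and "s < 1/2"
  shows "\<exists>c>0. \<forall>r lam1 Lam1. valid_weights r \<and> 0 < lam1 \<and> lam1 \<le> Lam1 \<and>
      (\<forall>n. \<forall>x\<in>V1 n. \<forall>y\<in>V1 n. x \<noteq> y \<longrightarrow>
         lam1 * \<bar>x - y\<bar> powr (-1 - 2 * s) \<le> j1 r n x y \<and>
         j1 r n x y \<le> Lam1 * \<bar>x - y\<bar> powr (-1 - 2 * s))
    \<longrightarrow> (\<forall>n u. ennreal (c * lam1) * Hs_seminorm_sq s (Ext1 n u) \<le> ennreal (Energy1 r n u))"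
proof (intro exI[of _ "(1/2 - s)^2 / (16 * 2 powr (1 + 2 * s))"] conjI allI impI)
  show "0 < (1/2 - s)^2 / (16 * 2 powr (1 + 2 * s))" using assms by simp
next
  fix r lam1 Lam1 n u
  \<comment> \<open>only the lower bound on j1 is needed\<close>
  assume "valid_weights r \<and> 0 < lam1 \<and> lam1 \<le> Lam1 \<and>
      (\<forall>n. \<forall>x\<in>V1 n. \<forall>y\<in>V1 n. x \<noteq> y \<longrightarrow>
         lam1 * \<bar>x - y\<bar> powr (-1 - 2 * s) \<le> j1 r n x y \<and>
         j1 r n x y \<le> Lam1 * \<bar>x - y\<bar> powr (-1 - 2 * s))"
  then show "ennreal ((1/2 - s)^2 / (16 * 2 powr (1 + 2 * s)) * lam1) * Hs_seminorm_sq s (Ext1 n u)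
      \<le> ennreal (Energy1 r n u)"
    using Hs_seminorm_sq_Ext1_le_Energy1[OF assms] by blast
qed

end
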